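(* Let $\Psi$ be a performance metric whose representation $\Psi(\mathbf{s},\mathbf{y})=\Phi(\widehat{TP}(\mathbf{s},\mathbf{y}),v(\mathbf{s}),p(\mathbf{y}))$ is such that $\Phi(\cdot,v,p)$ does not depend on its first argument. Then $\Psi$ satisfies the probability ranking principle, in the sense that for any set $\mathbf{x}$ of $n$ instances and any conditional label distribution $\mathbb{P}(\mathbf{y}\mid\mathbf{x})=\prod_{i=1}^n\eta_i^{y_i}(1-\eta_i)^{1-y_i}$, there is a maximizer $\mathbf{s}^*$ of $U_\Psi(\cdot;\mathbb{P})$ over $\{0,1\}^n$ with $\min\{\eta_i:s^*_i=1\}\ge\max\{\eta_i:s^*_i=0\}$.
   Context: Labels are binary. For predictions $\mathbf{s}\in\{0,1\}^n$ and labels $\mathbf{y}\in\{0,1\}^n$, $\widehat{TP}(\mathbf{s},\mathbf{y})=\frac1n\sum_i s_iy_i$, $v(\mathbf{s})=\frac1n\sum_i s_i$, $p(\mathbf{y})=\frac1n\sum_i y_i$; a metric $\Psi$ is a function of the empirical confusion matrix (true/false positive/negative rates), equivalently a function $\Phi(\widehat{TP},v,p)$. $\eta_i=\mathbb{P}(Y=1\mid x_i)$, and $U_\Psi(\mathbf{s};\mathbb{P})=\mathbb{E}_{\mathbf{y}\sim\mathbb{P}(\cdot\mid\mathbf{x})}\Psi(\mathbf{s},\mathbf{y})$. *)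

theory Defs
  imports Complex_Main
begin

definition binvecs :: "nat \<Rightarrow> (nat \<Rightarrow> real) set" where
  "binvecs n = {s. (\<forall>i<n. s i = 0 \<or> s i = 1) \<and> (\<forall>i\<ge>n. s i = 0)}"

definition TP_hat :: "nat \<Rightarrow> (nat \<Rightarrow> real) \<Rightarrow> (nat \<Rightarrow> real) \<Rightarrow> real" where
  "TP_hat n s y = (\<Sum>i<n. s i * y i) / real n"

definition vrate :: "nat \<Rightarrow> (nat \<Rightarrow> real) \<Rightarrow> real" where
  "vrate n s = (\<Sum>i<n. s i) / real n"

definition prate :: "nat \<Rightarrow> (nat \<Rightarrow> real) \<Rightarrow> real" where
  "prate n y = (\<Sum>i<n. y i) / real n"

definition label_prob :: "nat \<Rightarrow> (nat \<Rightarrow> real) \<Rightarrow> (nat \<Rightarrow> real) \<Rightarrow> real" where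
  "label_prob n \<eta> y = (\<Prod>i<n. if y i = 1 then \<eta> i else 1 - \<eta> i)"

definition U_metric :: "(real \<Rightarrow> real \<Rightarrow> real \<Rightarrow> real) \<Rightarrow> nat \<Rightarrow> (nat \<Rightarrow> real) \<Rightarrow> (nat \<Rightarrow> real) \<Rightarrow> real" where
  "U_metric \<Phi> n \<eta> s =
     (\<Sum>y\<in>binvecs n. label_prob n \<eta> y * \<Phi> (TP_hat n s y) (vrate n s) (prate n y))"

end

theory Submission
  imports Defs
begin

text \<open>If \<Phi> ignores its first argument, the expected utility depends on \<open>s\<close> only through
  the number of predicted positives. Among the maximisers of the utility pick one that also
  maximises \<open>\<Sum>i. s i * \<eta> i\<close>. Should it predict \<open>i\<close> positive and \<open>j\<close> negative with
  \<open>\<eta> i < \<eta> j\<close>, swapping \<open>s i\<close> and \<open>s j\<close> keeps the number of positives, hence the utility,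
  but strictly increases the secondary objective, a contradiction.\<close>

lemma finite_binvecs: "finite (binvecs n)"
proof -
  have "binvecs n \<subseteq> {f. \<forall>x. (x \<in> {..<n} \<longrightarrow> f x \<in> {0,1}) \<and> (x \<notin> {..<n} \<longrightarrow> f x = 0)}"
    unfolding binvecs_def by auto
  moreover have "finite {f::nat\<Rightarrow>real. \<forall>x. (x \<in> {..<n} \<longrightarrow> f x \<in> {0,1}) \<and> (x \<notin> {..<n} \<longrightarrow> f x = 0)}"
    by (rule finite_set_of_finite_funs) auto
  ultimately show ?thesis by (rule finite_subset)
qed

lemma zero_in_binvecs: "(\<lambda>_. 0) \<in> binvecs n"
  unfolding binvecs_def by auto

lemma finite_ex_max:
  fixes f :: "'a \<Rightarrow> real"
  assumes "finite A" "A \<noteq> {}"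
  shows "\<exists>x\<in>A. \<forall>y\<in>A. f y \<le> f x"
proof -
  have "Max (f ` A) \<in> f ` A" using assms by (intro Max_in) auto
  then obtain x where "x \<in> A" "f x = Max (f ` A)" by (auto simp del: Max_in)
  with assms(1) show ?thesis by (intro bexI[of _ x]) auto
qed

lemma finite_ex_lex_max:
  fixes f g :: "'a \<Rightarrow> real"
  assumes "finite A" "A \<noteq> {}"
  shows "\<exists>x\<in>A. (\<forall>y\<in>A. f y \<le> f x) \<and> (\<forall>y\<in>A. f y = f x \<longrightarrow> g y \<le> g x)"
proof -
  obtain x0 where "x0 \<in> A" and f_max: "\<forall>y\<in>A. f y \<le> f x0"
    using finite_ex_max[OF assms] by blast
  have "finite {y\<in>A. f y = f x0}" "{y\<in>A. f y = f x0} \<noteq> {}"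
    using assms(1) \<open>x0 \<in> A\<close> by auto
  then obtain x where "x \<in> A" "f x = f x0" and g_max: "\<forall>y\<in>A. f y = f x0 \<longrightarrow> g y \<le> g x"
    using finite_ex_max[of "{y\<in>A. f y = f x0}" g] by auto
  with f_max show ?thesis by metis
qed

lemma U_metric_eq_if_count_eq:
  assumes "\<forall>t t' v p. \<Phi> t v p = \<Phi> t' v p"
    and "(\<Sum>i<n. s i) = (\<Sum>i<n. s' i)"
  shows "U_metric \<Phi> n \<eta> s = U_metric \<Phi> n \<eta> s'"
proof -
  have "vrate n s = vrate n s'" using assms(2) unfolding vrate_def by simp
  then show ?thesis unfolding U_metric_def
    by (intro sum.cong refl) (metis assms(1))
qed

definition swap_labels :: "nat \<Rightarrow> nat \<Rightarrow> (nat \<Rightarrow> real) \<Rightarrow> nat \<Rightarrow> real" where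
  "swap_labels i j s = s(i := s j, j := s i)"

lemma swap_labels_in_binvecs:
  assumes "s \<in> binvecs n" "i < n" "j < n"
  shows "swap_labels i j s \<in> binvecs n"
  using assms unfolding binvecs_def swap_labels_def by auto

lemma sum_swap_labels:
  fixes w :: "nat \<Rightarrow> real"
  assumes "i < n" "j < n" "i \<noteq> j"
  shows "(\<Sum>k<n. swap_labels i j s k * w k)
           = (\<Sum>k<n. s k * w k) + (s i - s j) * (w j - w i)"
proof -
  have "(\<Sum>k<n. swap_labels i j s k * w k) - (\<Sum>k<n. s k * w k)
          = (\<Sum>k<n. (swap_labels i j s k - s k) * w k)"
    unfolding left_diff_distrib sum_subtractf ..
  also have "\<dots> = (\<Sum>k\<in>{i, j}. (swap_labels i j s k - s k) * w k)"
    by (rule sum.mono_neutral_right) (use assms in \<open>auto simp: swap_labels_def\<close>)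
  also have "\<dots> = (s i - s j) * (w j - w i)"
    using assms by (simp add: swap_labels_def algebra_simps)
  finally show ?thesis by simp
qed

theorem proposition2:
  fixes \<Phi> :: "real \<Rightarrow> real \<Rightarrow> real \<Rightarrow> real" and n :: nat and \<eta> :: "nat \<Rightarrow> real"
  assumes indep: "\<forall>t t' v p. \<Phi> t v p = \<Phi> t' v p"
    and eta_range: "\<forall>i<n. 0 \<le> \<eta> i \<and> \<eta> i \<le> 1"
  shows "\<exists>s\<in>binvecs n. (\<forall>s'\<in>binvecs n. U_metric \<Phi> n \<eta> s' \<le> U_metric \<Phi> n \<eta> s) \<and>
           (\<forall>i<n. \<forall>j<n. s i = 1 \<and> s j = 0 \<longrightarrow> \<eta> j \<le> \<eta> i)"
proof -
  obtain s where s: "s \<in> binvecs n"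
    and U_max: "\<forall>s'\<in>binvecs n. U_metric \<Phi> n \<eta> s' \<le> U_metric \<Phi> n \<eta> s"
    and tie_max: "\<forall>s'\<in>binvecs n. U_metric \<Phi> n \<eta> s' = U_metric \<Phi> n \<eta> s
                    \<longrightarrow> (\<Sum>k<n. s' k * \<eta> k) \<le> (\<Sum>k<n. s k * \<eta> k)"
    using finite_ex_lex_max[OF finite_binvecs, of n "U_metric \<Phi> n \<eta>" "\<lambda>s. \<Sum>k<n. s k * \<eta> k"]
      zero_in_binvecs by blast
  have "\<eta> j \<le> \<eta> i" if "i < n" "j < n" "s i = 1" "s j = 0" for i j
  proof -
    let ?s' = "swap_labels i j s"
    have "i \<noteq> j" using that by auto
    have "(\<Sum>k<n. ?s' k) = (\<Sum>k<n. s k)"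
      using sum_swap_labels[OF that(1,2) \<open>i \<noteq> j\<close>, of s "\<lambda>_. 1"] by simp
    then have "U_metric \<Phi> n \<eta> ?s' = U_metric \<Phi> n \<eta> s"
      by (rule U_metric_eq_if_count_eq[OF indep])
    then have "(\<Sum>k<n. ?s' k * \<eta> k) \<le> (\<Sum>k<n. s k * \<eta> k)"
      using tie_max swap_labels_in_binvecs[OF s that(1,2)] by simp
    with sum_swap_labels[OF that(1,2) \<open>i \<noteq> j\<close>, of s \<eta>] that(3,4) show ?thesis by simp
  qed
  then show ?thesis using s U_max by (intro bexI[of _ s]) auto
qed

end
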